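(* Let $d\ge 3$ and let $U$ be the $d\times d$ cyclic shift (circulant) matrix, i.e. $U_{i,j}=1$ if $j\equiv i+1 \pmod d$ and $U_{i,j}=0$ otherwise, with indices $i,j\in\{1,\dots,d\}$. For $k>0$ let $$S(k)=\big((k-1)I+(k+1)U\big)\big((k+1)I+(k-1)U\big)^{-1}.$$ Then: (a) If $d$ is even, $\lim_{k\to\infty}S_{i,j}(k)=\delta_{i,j}-\frac{2}{d}(-1)^{i+j}$ for all $i,j$. (b) If $d$ is odd, $\lim_{k\to\infty}S(k)=I$. In both cases the limiting matrix is symmetric.
   Context: $S(k)$ is the vertex scattering matrix of the "preferred orientation" vertex condition $(U-I)\Psi(v)+i(U+I)\Psi'(v)=0$ at a vertex of degree $d$. The edges at the vertex are labelled $1,\dots,d$. *)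

theory Defs
  imports "HOL-Analysis.Analysis" "Jordan_Normal_Form.Gauss_Jordan_Elimination"
begin

text \<open>Indices are 0-based: i, j range over 0..d-1 (paper: 1..d). The cyclic shift
  has entry 1 iff j = (i+1) mod d; the parity of i+j is unchanged by the shift of
  indices, so the formula for the limit is the same.\<close>

definition shift_mat :: "nat \<Rightarrow> real mat" where
  "shift_mat d = mat d d (\<lambda>(i,j). if j = (i + 1) mod d then 1 else 0)"

definition scat_mat :: "nat \<Rightarrow> real \<Rightarrow> real mat" where
  "scat_mat d k =
     ((k - 1) \<cdot>\<^sub>m 1\<^sub>m d + (k + 1) \<cdot>\<^sub>m shift_mat d) *
     the (mat_inverse ((k + 1) \<cdot>\<^sub>m 1\<^sub>m d + (k - 1) \<cdot>\<^sub>m shift_mat d))"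

end

theory Submission
  imports Defs "HOL-Real_Asymp.Real_Asymp" "Jordan_Normal_Form.Determinant"
begin

(* With t = (k - 1) / (k + 1) we have S(k) = (t I + U) (I + t U)^-1. Since U^d = I, the inverse
   of I + t U is the circulant matrix with entries (-t)^m / (1 - (-t)^d) at cyclic offset m
   (a truncated geometric series), so S(k) is circulant with explicit entries. As k tends to
   infinity, t tends to 1. For odd d the denominator 1 + t^d tends to 2 and the entries tend to
   those of I. For even d numerators and denominator vanish, and the quotients
   (1 - t^n) / (1 - t^d) tend to n / d, which yields the correction -2/d (-1)^(i+j). *)

(* (j + d - i) mod d is the cyclic offset (j - i) mod d, written without truncated subtraction. *)
definition circulant :: "nat \<Rightarrow> (nat \<Rightarrow> 'a) \<Rightarrow> 'a mat" where
  "circulant d c = mat d d (\<lambda>(i, j). c ((j + d - i) mod d))"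

lemma circulant_carrier_mat [simp]: "circulant d c \<in> carrier_mat d d"
  by (simp add: circulant_def)

lemma dim_circulant [simp]: "dim_row (circulant d c) = d" "dim_col (circulant d c) = d"
  by (simp_all add: circulant_def)

lemma index_circulant [simp]: "i < d \<Longrightarrow> j < d \<Longrightarrow> circulant d c $$ (i, j) = c ((j + d - i) mod d)"
  by (simp add: circulant_def)

lemma circulant_cong: "(\<And>m. m < d \<Longrightarrow> c m = c' m) \<Longrightarrow> circulant d c = circulant d c'"
  by (auto simp: circulant_def intro!: eq_matI)

lemma cyclic_offset_eq_0_iff:
  assumes "i < d" "j < (d::nat)"
  shows "(j + d - i) mod d = 0 \<longleftrightarrow> i = j"
proof (cases "i \<le> j")
  case True
  then have "(j + d - i) mod d = j - i"
    using assms by (simp add: mod_if)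
  then show ?thesis using True by auto
qed (use assms in \<open>auto simp: mod_if\<close>)

lemma mod_diff_one_eq:
  assumes "0 < (x::nat)" "0 < d"
  shows "(x - 1) mod d = (x mod d + d - 1) mod d"
proof -
  have "x - 1 + d = (x mod d + d - 1) + x div d * d"
    using div_mult_mod_eq[of x d] assms by arith
  then show ?thesis
    by (metis mod_add_self2 mod_mult_self1)
qed

lemma cyclic_offset_Suc:
  assumes "i < d" "j < (d::nat)"
  shows "(j + d - Suc i mod d) mod d = ((j + d - i) mod d + d - 1) mod d"
proof -
  have "j + d - Suc i mod d = (j + d - i - 1) + (if Suc i = d then d else 0)"
    using assms by (auto simp: mod_if)
  then have "(j + d - Suc i mod d) mod d = (j + d - i - 1) mod d"
    by simp
  also have "\<dots> = ((j + d - i) mod d + d - 1) mod d"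
    using assms by (intro mod_diff_one_eq) auto
  finally show ?thesis .
qed

lemma cyclic_pred: "m < (d::nat) \<Longrightarrow> (m + d - 1) mod d = (if m = 0 then d - 1 else m - 1)"
proof (cases m)
  case (Suc n)
  then have "m + d - 1 = n + d" by simp
  with Suc show "m < d \<Longrightarrow> ?thesis" by simp
qed simp

lemma cyclic_offset_even_iff:
  assumes "even d" "i < (d::nat)"
  shows "even ((j + d - i) mod d) \<longleftrightarrow> even (i + j)"
proof -
  have "even ((j + d - i) mod d) \<longleftrightarrow> even (j + d - i)"
    using assms(1) by (simp add: dvd_mod_iff)
  also have "\<dots> \<longleftrightarrow> even (i + j)"
    using assms by (auto simp: even_diff_nat)
  finally show ?thesis .
qed

lemma circulant_delta: "circulant d (\<lambda>m. if m = 0 then 1 else 0) = 1\<^sub>m d"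
  by (auto intro!: eq_matI simp: cyclic_offset_eq_0_iff)

lemma shift_combination_mult_circulant:
  "(x \<cdot>\<^sub>m 1\<^sub>m d + y \<cdot>\<^sub>m shift_mat d) * circulant d c
     = circulant d (\<lambda>m. x * c m + y * c ((m + d - 1) mod d))"
proof (rule eq_matI)
  fix i j assume "i < dim_row (circulant d (\<lambda>m. x * c m + y * c ((m + d - 1) mod d)))"
    and "j < dim_col (circulant d (\<lambda>m. x * c m + y * c ((m + d - 1) mod d)))"
  then have i: "i < d" and j: "j < d" by auto
  have "((x \<cdot>\<^sub>m 1\<^sub>m d + y \<cdot>\<^sub>m shift_mat d) * circulant d c) $$ (i, j)
      = (\<Sum>l<d. (if l = i then x * circulant d c $$ (l, j) else 0)
                 + (if l = Suc i mod d then y * circulant d c $$ (l, j) else 0))"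
    using i j by (auto simp: scalar_prod_def shift_mat_def distrib_right lessThan_atLeast0 intro!: sum.cong)
  also have "\<dots> = x * circulant d c $$ (i, j) + y * circulant d c $$ (Suc i mod d, j)"
    using i by (simp add: sum.distrib sum.delta')
  also have "\<dots> = x * c ((j + d - i) mod d) + y * c (((j + d - i) mod d + d - 1) mod d)"
    using i j by (simp add: cyclic_offset_Suc)
  finally show "((x \<cdot>\<^sub>m 1\<^sub>m d + y \<cdot>\<^sub>m shift_mat d) * circulant d c) $$ (i, j)
      = circulant d (\<lambda>m. x * c m + y * c ((m + d - 1) mod d)) $$ (i, j)"
    using i j by simp
qed (auto simp: shift_mat_def)

lemma mat_inverse_eq_Some:
  fixes A B :: "'a :: field mat"
  assumes A: "A \<in> carrier_mat n n" and B: "B \<in> carrier_mat n n" and AB: "A * B = 1\<^sub>m n"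
  shows "mat_inverse A = Some B"
proof (cases "mat_inverse A")
  case None
  have "B * A = 1\<^sub>m n" by (rule mat_mult_left_right_inverse[OF A B AB])
  then have "A \<in> Units (ring_mat TYPE('a) n ())"
    using A B AB by (auto simp: Units_def ring_mat_simps)
  with mat_inverse(1)[OF A None, of "()"] show ?thesis by simp
next
  case (Some B')
  from mat_inverse(2)[OF A Some] have B': "B' \<in> carrier_mat n n" "B' * A = 1\<^sub>m n" by auto
  have "B' = B' * (A * B)" using B' by (simp add: AB)
  also have "\<dots> = (B' * A) * B" using assoc_mult_mat[OF B'(1) A B] by simp
  also have "\<dots> = B" using B B' by simp
  finally show ?thesis using Some by simp
qed

lemma shift_combination_inverse:
  fixes a t :: real
  assumes "0 < d" "a \<noteq> 0" "(-t) ^ d \<noteq> 1"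
  shows "(a \<cdot>\<^sub>m 1\<^sub>m d + (a * t) \<cdot>\<^sub>m shift_mat d) * circulant d (\<lambda>m. (-t) ^ m / (a * (1 - (-t) ^ d)))
     = 1\<^sub>m d"
proof -
  define D where "D = 1 - (-t) ^ d"
  have "D \<noteq> 0" using assms(3) by (simp add: D_def)
  then have combine: "a * (p / (a * D)) + a * t * (q / (a * D)) = (p + t * q) / D" for p q
    using assms(2) by (simp add: field_simps)
  have wrap: "1 + t * (-t) ^ (d - Suc 0) = D"
    using assms(1) by (cases d) (simp_all add: D_def)
  have entry: "a * ((-t) ^ m / (a * D)) + a * t * ((-t) ^ ((m + d - 1) mod d) / (a * D))
      = (if m = 0 then 1 else 0)" if "m < d" for m
    using that \<open>D \<noteq> 0\<close> unfolding combine by (cases m) (simp_all add: cyclic_pred wrap)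
  have "(a \<cdot>\<^sub>m 1\<^sub>m d + (a * t) \<cdot>\<^sub>m shift_mat d) * circulant d (\<lambda>m. (-t) ^ m / (a * D))
      = circulant d (\<lambda>m. if m = 0 then 1 else 0)"
    unfolding shift_combination_mult_circulant by (rule circulant_cong) (rule entry)
  then show ?thesis by (simp only: D_def circulant_delta)
qed

definition scat_entry :: "nat \<Rightarrow> real \<Rightarrow> nat \<Rightarrow> real" where
  "scat_entry d t m =
     (if m = 0 then t + (-t) ^ (d - 1) else (-t) ^ (m - 1) * (1 - t\<^sup>2)) / (1 - (-t) ^ d)"

lemma scat_mat_eq_circulant:
  assumes "0 < d" "0 < k"
  shows "scat_mat d k = circulant d (scat_entry d ((k - 1) / (k + 1)))"
proof -
  define t where "t = (k - 1) / (k + 1)"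
  define D where "D = 1 - (-t) ^ d"
  define B where "B = circulant d (\<lambda>m. (-t) ^ m / ((k + 1) * D))"
  have k1: "k - 1 = (k + 1) * t" and k0: "k + 1 \<noteq> 0"
    using assms(2) by (simp_all add: t_def)
  have "\<bar>t\<bar> < 1" using assms(2) by (simp add: t_def abs_less_iff field_simps)
  then have den: "(-t) ^ d \<noteq> 1"
    using assms(1) by (metis abs_1 abs_eq_iff' abs_if less_numeral_extra(4) power_abs power_less_one_iff)
  then have "D \<noteq> 0" by (simp add: D_def)
  then have "a * t * (p / (a * D)) + a * (q / (a * D)) = (t * p + q) / D" if "a \<noteq> 0" for a p q
    using that by (simp add: field_simps)
  note combine = this[OF k0]
  have "((k + 1) \<cdot>\<^sub>m 1\<^sub>m d + (k - 1) \<cdot>\<^sub>m shift_mat d) * B = 1\<^sub>m d"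
    unfolding B_def D_def k1 by (rule shift_combination_inverse[OF assms(1) k0 den])
  then have "mat_inverse ((k + 1) \<cdot>\<^sub>m 1\<^sub>m d + (k - 1) \<cdot>\<^sub>m shift_mat d) = Some B"
    by (intro mat_inverse_eq_Some) (auto simp: B_def shift_mat_def)
  then have "scat_mat d k = ((k - 1) \<cdot>\<^sub>m 1\<^sub>m d + (k + 1) \<cdot>\<^sub>m shift_mat d) * B"
    by (simp add: scat_mat_def)
  also have "\<dots> = circulant d (scat_entry d t)"
    unfolding B_def shift_combination_mult_circulant k1 combine
  proof (intro circulant_cong)
    show "(t * (-t) ^ m + (-t) ^ ((m + d - 1) mod d)) / D = scat_entry d t m" if "m < d" for m
      using that by (cases m) (simp_all add: cyclic_pred scat_entry_def D_def power2_eq_square algebra_simps)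
  qed
  finally show ?thesis by (simp add: t_def)
qed

lemma tendsto_one_minus_power_ratio:
  assumes "0 < d"
  shows "((\<lambda>t::real. (1 - t ^ n) / (1 - t ^ d)) \<longlongrightarrow> real n / real d) (at 1)"
proof -
  have "((\<lambda>t. (\<Sum>i<n. t ^ i) / (\<Sum>i<d. t ^ i)) \<longlongrightarrow> (\<Sum>i<n. 1 ^ i) / (\<Sum>i<d. (1::real) ^ i)) (at 1)"
    by (intro tendsto_intros) (use assms in simp)
  moreover have "\<forall>\<^sub>F t::real in at 1. (\<Sum>i<n. t ^ i) / (\<Sum>i<d. t ^ i) = (1 - t ^ n) / (1 - t ^ d)"
    by (rule eventually_mono[OF eventually_neq_at_within[of 1]]) (simp add: one_diff_power_eq)
  ultimately show ?thesis by (simp add: Lim_transform_eventually)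
qed

definition scat_limit_entry :: "nat \<Rightarrow> nat \<Rightarrow> real" where
  "scat_limit_entry d m = (if m = 0 then 1 else 0) - (if even d then 2 / real d * (-1) ^ m else 0)"

lemma scat_entry_tendsto_even:
  assumes "even d" "0 < d"
  shows "((\<lambda>t. scat_entry d t m) \<longlongrightarrow> scat_limit_entry d m) (at 1)"
proof (cases m)
  case 0
  have "2 \<le> d" using assms by presburger
  then have "d - 1 = Suc (d - 2)" by simp
  then have "scat_entry d t m = t * ((1 - t ^ (d - 2)) / (1 - t ^ d))" for t
    using 0 assms(1) by (simp add: scat_entry_def algebra_simps)
  moreover have "((\<lambda>t::real. t * ((1 - t ^ (d - 2)) / (1 - t ^ d))) \<longlongrightarrow> 1 * (real (d - 2) / real d)) (at 1)"
    by (intro tendsto_intros tendsto_one_minus_power_ratio assms(2))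
  moreover have "1 * (real (d - 2) / real d) = scat_limit_entry d m"
    using 0 assms \<open>2 \<le> d\<close> by (simp add: scat_limit_entry_def of_nat_diff field_simps)
  ultimately show ?thesis by simp
next
  case (Suc n)
  then have "scat_entry d t m = (-t) ^ n * ((1 - t ^ 2) / (1 - t ^ d))" for t
    using assms(1) by (simp add: scat_entry_def)
  moreover have "((\<lambda>t::real. (-t) ^ n * ((1 - t ^ 2) / (1 - t ^ d))) \<longlongrightarrow> (-1) ^ n * (real 2 / real d)) (at 1)"
    by (intro tendsto_intros tendsto_one_minus_power_ratio assms(2))
  moreover have "(-1) ^ n * (real 2 / real d) = scat_limit_entry d m"
    using Suc assms(1) by (simp add: scat_limit_entry_def)
  ultimately show ?thesis by simp
qed

lemma scat_entry_tendsto_odd: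
  assumes "odd d"
  shows "((\<lambda>t. scat_entry d t m) \<longlongrightarrow> scat_limit_entry d m) (at 1)"
proof (cases m)
  case 0
  have "((\<lambda>t::real. (t + (-t) ^ (d - 1)) / (1 - (-t) ^ d)) \<longlongrightarrow> (1 + (-1) ^ (d - 1)) / (1 - (-1) ^ d)) (at 1)"
    by (intro tendsto_intros) (use assms in simp)
  then show ?thesis
    using 0 assms by (simp add: scat_entry_def scat_limit_entry_def even_diff_nat)
next
  case (Suc n)
  have "((\<lambda>t::real. (-t) ^ n * (1 - t\<^sup>2) / (1 - (-t) ^ d)) \<longlongrightarrow> (-1) ^ n * (1 - 1\<^sup>2) / (1 - (-1) ^ d)) (at 1)"
    by (intro tendsto_intros) (use assms in simp)
  then show ?thesis
    using Suc assms by (simp add: scat_entry_def scat_limit_entry_def)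
qed

lemma scat_entry_tendsto:
  assumes "0 < d"
  shows "((\<lambda>t. scat_entry d t m) \<longlongrightarrow> scat_limit_entry d m) (at 1)"
  using assms scat_entry_tendsto_even scat_entry_tendsto_odd by blast

lemma scat_mat_tendsto:
  assumes "0 < d" "i < d" "j < d"
  shows "((\<lambda>k. scat_mat d k $$ (i, j)) \<longlongrightarrow> circulant d (scat_limit_entry d) $$ (i, j)) at_top"
proof -
  have "filterlim (\<lambda>k::real. (k - 1) / (k + 1)) (at 1) at_top"
    by real_asymp
  with scat_entry_tendsto[OF assms(1)]
  have "((\<lambda>k. scat_entry d ((k - 1) / (k + 1)) ((j + d - i) mod d))
          \<longlongrightarrow> scat_limit_entry d ((j + d - i) mod d)) at_top"
    by (rule filterlim_compose)
  moreover have "\<forall>\<^sub>F k in at_top. scat_entry d ((k - 1) / (k + 1)) ((j + d - i) mod d) = scat_mat d k $$ (i, j)"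
    using eventually_gt_at_top[of 0]
    by eventually_elim (use assms in \<open>simp add: scat_mat_eq_circulant\<close>)
  ultimately show ?thesis
    using assms by (simp add: Lim_transform_eventually)
qed

lemma circulant_scat_limit_entry_even:
  assumes "even d"
  shows "circulant d (scat_limit_entry d)
    = mat d d (\<lambda>(i, j). (if i = j then 1 else 0) - 2 / real d * (-1) ^ (i + j))"
  using assms by (auto intro!: eq_matI simp: scat_limit_entry_def cyclic_offset_eq_0_iff
      minus_one_power_iff cyclic_offset_even_iff)

lemma circulant_scat_limit_entry_odd: "odd d \<Longrightarrow> circulant d (scat_limit_entry d) = 1\<^sub>m d"
  unfolding scat_limit_entry_def[abs_def] by (simp add: circulant_delta)

theorem mainTheorem2:
  fixes d :: nat
  assumes "d \<ge> 3"
  shows "\<exists>L \<in> carrier_mat d d.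
           (\<forall>i<d. \<forall>j<d. ((\<lambda>k. scat_mat d k $$ (i, j)) \<longlongrightarrow> L $$ (i, j)) at_top)
         \<and> (even d \<longrightarrow> L = mat d d (\<lambda>(i, j). (if i = j then 1 else 0) - 2 / real d * (-1) ^ (i + j)))
         \<and> (odd d \<longrightarrow> L = 1\<^sub>m d)
         \<and> transpose_mat L = L"
proof (intro bexI conjI allI impI)
  let ?L = "circulant d (scat_limit_entry d)"
  show "((\<lambda>k. scat_mat d k $$ (i, j)) \<longlongrightarrow> ?L $$ (i, j)) at_top" if "i < d" "j < d" for i j
    using assms that by (intro scat_mat_tendsto) auto
  show "even d \<Longrightarrow> ?L = mat d d (\<lambda>(i, j). (if i = j then 1 else 0) - 2 / real d * (-1) ^ (i + j))"
    by (rule circulant_scat_limit_entry_even)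
  show "odd d \<Longrightarrow> ?L = 1\<^sub>m d"
    by (rule circulant_scat_limit_entry_odd)
  show "transpose_mat ?L = ?L"
  proof (cases "even d")
    case True
    show ?thesis unfolding circulant_scat_limit_entry_even[OF True]
      by (rule eq_matI) (auto simp: add.commute)
  qed (simp add: circulant_scat_limit_entry_odd)
qed simp

end
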